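(* If an atomic flow is normal for $\mathsf c$, then all its $\mathsf{ai}$-paths are clean paths.
   Context: An atomic flow is a tuple $(V,E,\eta,up,lo)$: finite sets of vertices and edges, a labelling of vertices by interaction, cut, weakening, coweakening, contraction or cocontraction, and maps $up:E\to V\cup\{\top\}$, $lo:E\to V\cup\{\bot\}$. Upper edges of $\nu$: $lo(\epsilon)=\nu$; lower edges: $up(\epsilon)=\nu$. (Upper, lower) edge numbers: $(0,2)$ interaction, $(2,0)$ cut, $(0,1)$ weakening, $(1,0)$ coweakening, $(2,1)$ contraction, $(1,2)$ cocontraction; no directed cycles; there is $\pi:E\to\{+,-\}$ giving all edges of a (co)contraction the same sign and the two edges of an interaction/cut different signs. A path from $\nu$ to $\nu'$ is a sequence of edges $\epsilon_1,\dots,\epsilon_h$ with $lo(\epsilon_i)=up(\epsilon_{i+1})$, $up(\epsilon_1)=\nu$, $lo(\epsilon_h)=\nu'$; its reversal is a path from $\nu'$ to $\nu$. An $\mathsf{ai}$-path from $\nu$ to $\nu'$ is either a path from $\nu$ to $\nu'$ or a sequence $\epsilon_1,\dots,\epsilon_k,\epsilon_{k+1},\dots,\epsilon_h$ with $\epsilon_k\neq\epsilon_{k+1}$ such that, for some interaction or cut vertex $\nu''$, $\epsilon_1,\dots,\epsilon_k$ is an $\mathsf{ai}$-path from $\nu$ to $\nu''$ and $\epsilon_{k+1},\dots,\epsilon_h$ is an $\mathsf{ai}$-path from $\nu''$ to $\nu'$. An $\mathsf{ai}$-connection is a path from an interaction vertex to a cut vertex or from a cut vertex to an interaction vertex. A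 simple edge is an $\mathsf{ai}$-connection consisting of a single edge. A clean path is an $\mathsf{ai}$-path in which every $\mathsf{ai}$-connection (occurring in it) is a simple edge. A flow is normal for $\mathsf c$ if none of the following patterns occurs in it: (c1) a contraction whose lower edge is an upper edge of a cut; (c2) an interaction one of whose lower edges is the upper edge of a cocontraction; (c3) a contraction whose lower edge is the upper edge of a cocontraction. *)

theory Defs
  imports Main
begin

datatype kind = Interaction | Cut | Weakening | Coweakening | Contraction | Cocontraction

datatype 'v endpoint = Top | Bot | Vtx 'v

datatype polarity = Plus | Minus

record ('v, 'e) flow =
  verts :: "'v set"
  edges :: "'e set"
  eta :: "'v \<Rightarrow> kind"
  up :: "'e \<Rightarrow> 'v endpoint"
  lo :: "'e \<Rightarrow> 'v endpoint"

definition upper_edges :: "('v, 'e) flow \<Rightarrow> 'v \<Rightarrow> 'e set" where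
  "upper_edges F \<nu> = {\<epsilon> \<in> edges F. lo F \<epsilon> = Vtx \<nu>}"

definition lower_edges :: "('v, 'e) flow \<Rightarrow> 'v \<Rightarrow> 'e set" where
  "lower_edges F \<nu> = {\<epsilon> \<in> edges F. up F \<epsilon> = Vtx \<nu>}"

fun n_upper :: "kind \<Rightarrow> nat" where
  "n_upper Interaction = 0" | "n_upper Cut = 2" | "n_upper Weakening = 0"
| "n_upper Coweakening = 1" | "n_upper Contraction = 2" | "n_upper Cocontraction = 1"

fun n_lower :: "kind \<Rightarrow> nat" where
  "n_lower Interaction = 2" | "n_lower Cut = 0" | "n_lower Weakening = 1"
| "n_lower Coweakening = 0" | "n_lower Contraction = 1" | "n_lower Cocontraction = 2"

definition dpath :: "('v, 'e) flow \<Rightarrow> 'v \<Rightarrow> 'v \<Rightarrow> 'e list \<Rightarrow> bool" where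
  "dpath F \<nu> \<nu>' es \<longleftrightarrow> es \<noteq> [] \<and> set es \<subseteq> edges F
     \<and> up F (hd es) = Vtx \<nu> \<and> lo F (last es) = Vtx \<nu>'
     \<and> (\<forall>i. Suc i < length es \<longrightarrow> lo F (es ! i) = up F (es ! Suc i))"

definition atomic_flow :: "('v, 'e) flow \<Rightarrow> bool" where
  "atomic_flow F \<longleftrightarrow>
     finite (verts F) \<and> finite (edges F)
   \<and> (\<forall>\<epsilon> \<in> edges F. up F \<epsilon> = Top \<or> (\<exists>\<nu>\<in>verts F. up F \<epsilon> = Vtx \<nu>))
   \<and> (\<forall>\<epsilon> \<in> edges F. lo F \<epsilon> = Bot \<or> (\<exists>\<nu>\<in>verts F. lo F \<epsilon> = Vtx \<nu>))
   \<and> (\<forall>\<nu> \<in> verts F. card (upper_edges F \<nu>) = n_upper (eta F \<nu>)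
                    \<and> card (lower_edges F \<nu>) = n_lower (eta F \<nu>))
   \<and> \<not> (\<exists>\<nu> es. dpath F \<nu> \<nu> es)
   \<and> (\<exists>\<pi> :: 'e \<Rightarrow> polarity.
        \<forall>\<nu> \<in> verts F.
          (eta F \<nu> \<in> {Contraction, Cocontraction} \<longrightarrow>
             (\<forall>\<epsilon>1 \<in> upper_edges F \<nu> \<union> lower_edges F \<nu>.
              \<forall>\<epsilon>2 \<in> upper_edges F \<nu> \<union> lower_edges F \<nu>. \<pi> \<epsilon>1 = \<pi> \<epsilon>2))
        \<and> (eta F \<nu> = Interaction \<longrightarrow>
             (\<forall>\<epsilon>1 \<in> lower_edges F \<nu>. \<forall>\<epsilon>2 \<in> lower_edges F \<nu>. \<epsilon>1 \<noteq> \<epsilon>2 \<longrightarrow> \<pi> \<epsilon>1 \<noteq> \<pi> \<epsilon>2))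
        \<and> (eta F \<nu> = Cut \<longrightarrow>
             (\<forall>\<epsilon>1 \<in> upper_edges F \<nu>. \<forall>\<epsilon>2 \<in> upper_edges F \<nu>. \<epsilon>1 \<noteq> \<epsilon>2 \<longrightarrow> \<pi> \<epsilon>1 \<noteq> \<pi> \<epsilon>2)))"

definition is_path :: "('v, 'e) flow \<Rightarrow> 'v \<Rightarrow> 'v \<Rightarrow> 'e list \<Rightarrow> bool" where
  "is_path F \<nu> \<nu>' es \<longleftrightarrow> dpath F \<nu> \<nu>' es \<or> dpath F \<nu>' \<nu> (rev es)"

inductive ai_path :: "('v, 'e) flow \<Rightarrow> 'v \<Rightarrow> 'v \<Rightarrow> 'e list \<Rightarrow> bool" for F where
  base: "is_path F \<nu> \<nu>' es \<Longrightarrow> ai_path F \<nu> \<nu>' es"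
| join: "\<lbrakk> ai_path F \<nu> \<nu>'' es1; ai_path F \<nu>'' \<nu>' es2; \<nu>'' \<in> verts F;
           eta F \<nu>'' \<in> {Interaction, Cut}; last es1 \<noteq> hd es2 \<rbrakk>
         \<Longrightarrow> ai_path F \<nu> \<nu>' (es1 @ es2)"

definition ai_connection :: "('v, 'e) flow \<Rightarrow> 'e list \<Rightarrow> bool" where
  "ai_connection F es \<longleftrightarrow> (\<exists>\<nu> \<in> verts F. \<exists>\<nu>' \<in> verts F. is_path F \<nu> \<nu>' es \<and>
      ((eta F \<nu> = Interaction \<and> eta F \<nu>' = Cut) \<or> (eta F \<nu> = Cut \<and> eta F \<nu>' = Interaction)))"

definition simple_edge :: "('v, 'e) flow \<Rightarrow> 'e list \<Rightarrow> bool" where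
  "simple_edge F es \<longleftrightarrow> ai_connection F es \<and> length es = 1"

definition clean_path :: "('v, 'e) flow \<Rightarrow> 'v \<Rightarrow> 'v \<Rightarrow> 'e list \<Rightarrow> bool" where
  "clean_path F \<nu> \<nu>' es \<longleftrightarrow> ai_path F \<nu> \<nu>' es \<and>
     (\<forall>xs c ys. es = xs @ c @ ys \<and> ai_connection F c \<longrightarrow> simple_edge F c)"

definition normal_c :: "('v, 'e) flow \<Rightarrow> bool" where
  "normal_c F \<longleftrightarrow>
     \<not> (\<exists>\<nu>\<in>verts F. \<exists>\<nu>'\<in>verts F. \<exists>\<epsilon>\<in>edges F. eta F \<nu> = Contraction \<and> eta F \<nu>' = Cut
          \<and> \<epsilon> \<in> lower_edges F \<nu> \<and> \<epsilon> \<in> upper_edges F \<nu>')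
   \<and> \<not> (\<exists>\<nu>\<in>verts F. \<exists>\<nu>'\<in>verts F. \<exists>\<epsilon>\<in>edges F. eta F \<nu> = Interaction \<and> eta F \<nu>' = Cocontraction
          \<and> \<epsilon> \<in> lower_edges F \<nu> \<and> \<epsilon> \<in> upper_edges F \<nu>')
   \<and> \<not> (\<exists>\<nu>\<in>verts F. \<exists>\<nu>'\<in>verts F. \<exists>\<epsilon>\<in>edges F. eta F \<nu> = Contraction \<and> eta F \<nu>' = Cocontraction
          \<and> \<epsilon> \<in> lower_edges F \<nu> \<and> \<epsilon> \<in> upper_edges F \<nu>')"

end

theory Submission
  imports Defs
begin

text \<open>Every \<open>ai\<close>-connection is a simple edge, which makes every \<open>ai\<close>-path clean.
  A path cannot leave a cut, which has no lower edges, so an \<open>ai\<close>-connection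
  is a directed path from an interaction to a cut, read in one direction or the
  other. Its inner vertices have both upper and lower edges, hence are
  (co)contractions. Since neither an interaction (c2) nor a contraction (c3)
  sits directly above a cocontraction, they are all contractions; so if there
  were one, the last one would sit directly above the cut, contradicting (c1).\<close>

lemma atomic_flow_edge_count_nonzero:
  assumes "atomic_flow F" "\<nu> \<in> verts F"
  shows "\<epsilon> \<in> upper_edges F \<nu> \<Longrightarrow> n_upper (eta F \<nu>) \<noteq> 0"
    and "\<epsilon> \<in> lower_edges F \<nu> \<Longrightarrow> n_lower (eta F \<nu>) \<noteq> 0"
proof -
  have "finite (upper_edges F \<nu>)" "finite (lower_edges F \<nu>)"
    using assms(1) unfolding atomic_flow_def upper_edges_def lower_edges_def by auto
  moreover have "card (upper_edges F \<nu>) = n_upper (eta F \<nu>)"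
    "card (lower_edges F \<nu>) = n_lower (eta F \<nu>)"
    using assms unfolding atomic_flow_def by auto
  ultimately show "\<epsilon> \<in> upper_edges F \<nu> \<Longrightarrow> n_upper (eta F \<nu>) \<noteq> 0"
    and "\<epsilon> \<in> lower_edges F \<nu> \<Longrightarrow> n_lower (eta F \<nu>) \<noteq> 0"
    by (metis card_0_eq empty_iff)+
qed

lemma atomic_flow_inner_vertex_kind:
  assumes "atomic_flow F" "w \<in> verts F" "\<epsilon> \<in> upper_edges F w" "\<delta> \<in> lower_edges F w"
  shows "eta F w = Contraction \<or> eta F w = Cocontraction"
  using atomic_flow_edge_count_nonzero[OF assms(1,2)] assms(3,4) by (cases "eta F w") auto

lemma atomic_flow_edge_endpoints:
  assumes "atomic_flow F" "\<epsilon> \<in> edges F"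
  shows "up F \<epsilon> = Top \<or> (\<exists>\<nu>\<in>verts F. up F \<epsilon> = Vtx \<nu>)"
    and "lo F \<epsilon> = Bot \<or> (\<exists>\<nu>\<in>verts F. lo F \<epsilon> = Vtx \<nu>)"
  using assms unfolding atomic_flow_def by (meson conjunct1 conjunct2)+

lemma dpath_first_edge_lower:
  assumes "dpath F \<nu> \<nu>' es"
  shows "es ! 0 \<in> lower_edges F \<nu>"
  using assms unfolding dpath_def lower_edges_def by (auto simp: hd_conv_nth)

lemma dpath_last_edge_upper:
  assumes "dpath F \<nu> \<nu>' es"
  shows "last es \<in> upper_edges F \<nu>'"
  using assms unfolding dpath_def upper_edges_def by auto

lemma dpath_link_vertex:
  assumes "atomic_flow F" "dpath F \<nu> \<nu>' es" "Suc i < length es"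
  obtains w where "w \<in> verts F" "es ! i \<in> upper_edges F w" "es ! Suc i \<in> lower_edges F w"
proof -
  have edges: "es ! i \<in> edges F" "es ! Suc i \<in> edges F"
    using assms(2,3) unfolding dpath_def by (auto dest: nth_mem)
  have link: "lo F (es ! i) = up F (es ! Suc i)"
    using assms(2,3) unfolding dpath_def by auto
  obtain w where "w \<in> verts F" "lo F (es ! i) = Vtx w"
    using atomic_flow_edge_endpoints(2)[OF assms(1) edges(1)]
      atomic_flow_edge_endpoints(1)[OF assms(1) edges(2)] link by auto
  then show thesis
    using that edges link unfolding upper_edges_def lower_edges_def by auto
qed

lemma normal_c_next_vertex_contraction:
  assumes af: "atomic_flow F" and nc: "normal_c F" and dp: "dpath F \<nu> \<nu>' es"
    and len: "Suc i < length es"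
    and p: "p \<in> verts F" "es ! i \<in> lower_edges F p" "eta F p \<in> {Interaction, Contraction}"
  shows "\<exists>w\<in>verts F. es ! Suc i \<in> lower_edges F w \<and> eta F w = Contraction"
proof -
  obtain w where w: "w \<in> verts F" "es ! i \<in> upper_edges F w" "es ! Suc i \<in> lower_edges F w"
    using dpath_link_vertex[OF af dp len] .
  have "eta F w = Contraction \<or> eta F w = Cocontraction"
    using atomic_flow_inner_vertex_kind[OF af w] .
  moreover have "es ! i \<in> edges F"
    using w(2) unfolding upper_edges_def by simp
  then have "eta F w \<noteq> Cocontraction"
    using nc p w(1,2) unfolding normal_c_def by blast
  ultimately show ?thesis
    using w by auto
qed

lemma normal_c_dpath_from_interaction:
  assumes af: "atomic_flow F" and nc: "normal_c F" and dp: "dpath F \<nu> \<nu>' es"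
    and \<nu>: "\<nu> \<in> verts F" "eta F \<nu> = Interaction"
  shows "Suc i < length es \<Longrightarrow> \<exists>u\<in>verts F. es ! Suc i \<in> lower_edges F u \<and> eta F u = Contraction"
proof (induction i)
  case 0
  show ?case
    using normal_c_next_vertex_contraction[OF af nc dp 0 \<nu>(1) dpath_first_edge_lower[OF dp]] \<nu>(2)
    by simp
next
  case (Suc j)
  then obtain u where "u \<in> verts F" "es ! Suc j \<in> lower_edges F u" "eta F u = Contraction"
    using Suc_lessD by blast
  then show ?case
    using normal_c_next_vertex_contraction[OF af nc dp Suc.prems] by simp
qed

lemma normal_c_dpath_interaction_cut_single_edge:
  assumes af: "atomic_flow F" and nc: "normal_c F" and dp: "dpath F \<nu> \<nu>' es"
    and \<nu>: "\<nu> \<in> verts F" "eta F \<nu> = Interaction"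
    and \<nu>': "\<nu>' \<in> verts F" "eta F \<nu>' = Cut"
  shows "length es = 1"
proof (rule ccontr)
  assume "length es \<noteq> 1"
  moreover have "es \<noteq> []"
    using dp unfolding dpath_def by simp
  ultimately have len: "Suc (length es - 2) < length es"
    by (cases es) auto
  have "Suc (length es - 2) = length es - 1"
    using len by linarith
  then have last: "last es = es ! Suc (length es - 2)"
    using \<open>es \<noteq> []\<close> by (simp add: last_conv_nth)
  obtain u where u: "u \<in> verts F" "last es \<in> lower_edges F u" "eta F u = Contraction"
    using normal_c_dpath_from_interaction[OF af nc dp \<nu> len] unfolding last by blast
  have "last es \<in> upper_edges F \<nu>'" "last es \<in> edges F"
    using dpath_last_edge_upper[OF dp] unfolding upper_edges_def by auto
  with u \<nu>' nc show False
    unfolding normal_c_def by blast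
qed

lemma atomic_flow_no_dpath_from_cut:
  assumes "atomic_flow F" "dpath F \<nu> \<nu>' es" "\<nu> \<in> verts F"
  shows "eta F \<nu> \<noteq> Cut"
  using atomic_flow_edge_count_nonzero(2)[OF assms(1,3) dpath_first_edge_lower[OF assms(2)]]
  by auto

lemma normal_c_ai_connection_simple_edge:
  assumes af: "atomic_flow F" and nc: "normal_c F" and c: "ai_connection F c"
  shows "simple_edge F c"
proof -
  obtain \<nu> \<nu>' where v: "\<nu> \<in> verts F" "\<nu>' \<in> verts F" "is_path F \<nu> \<nu>' c"
    and kinds: "(eta F \<nu> = Interaction \<and> eta F \<nu>' = Cut) \<or> (eta F \<nu> = Cut \<and> eta F \<nu>' = Interaction)"
    using c unfolding ai_connection_def by blast
  have "length c = 1"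
    using v(3) unfolding is_path_def
  proof
    assume dp: "dpath F \<nu> \<nu>' c"
    then have "eta F \<nu> = Interaction \<and> eta F \<nu>' = Cut"
      using kinds atomic_flow_no_dpath_from_cut[OF af _ v(1)] by blast
    then show ?thesis
      using normal_c_dpath_interaction_cut_single_edge[OF af nc dp v(1) _ v(2)] by blast
  next
    assume dp: "dpath F \<nu>' \<nu> (rev c)"
    then have "eta F \<nu>' = Interaction \<and> eta F \<nu> = Cut"
      using kinds atomic_flow_no_dpath_from_cut[OF af _ v(2)] by blast
    then show ?thesis
      using normal_c_dpath_interaction_cut_single_edge[OF af nc dp v(2) _ v(1)] by simp
  qed
  with c show ?thesis
    unfolding simple_edge_def by blast
qed

theorem proposition4p18:
  fixes F :: "('v, 'e) flow"
  assumes "atomic_flow F"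
    and "normal_c F"
    and "ai_path F \<nu> \<nu>' es"
  shows "clean_path F \<nu> \<nu>' es"
  using assms normal_c_ai_connection_simple_edge unfolding clean_path_def by blast

end
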